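(* Let $\|\cdot\|$ be a norm on $\mathbb{R}^d$ and let $\mathcal{X}\subseteq\mathbb{R}^d$ be closed and convex. Let $S,S_1,\dots,S_n$ be i.i.d. random variables with sample space $\mathcal{S}$, let $f:\mathcal{X}\times\mathcal{S}\to\mathbb{R}$ be convex in its first argument, write $f_i(x)=f(x;S_i)$, $F(x)=\mathbb{E}[f(x;S)]$ and $\bar F(x)=\frac1n\sum_{i=1}^n f_i(x)$. Suppose that $f$ is $L$-Lipschitz and $F$ is $\mu$-strongly convex (with $\mu>0$), and let $F^\star=\min_{x\in\mathcal{X}}F(x)$. Let $x_0,x_1,\dots,x_K\in\mathcal{X}$ be fixed candidate points (not depending on $S_1,\dots,S_n$) and let $k_{\mathrm{greedy}}\in\arg\min_{k\in\{0,1,\dots,K\}}\bar F(x_k)$. Then for all $\delta\in(0,1)$, with probability at least $1-\delta$, \[ F(x_{k_{\mathrm{greedy}}})-F^\star\le 2\max\left\{\min_{k\in\{0,\dots,K\}}F(x_k)-F^\star,\ \frac{32L^2}{\mu n}\ln\frac{2K}{\delta}\right\}. \]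
   Context: $f$ is $L$-Lipschitz means that almost surely $|f(x;S)-f(x';S)|\le L\|x-x'\|$ for all $x,x'\in\mathcal{X}$. $F$ is $\mu$-strongly convex (w.r.t. $\|\cdot\|$) means $F(u)\ge F(v)+g\cdot(u-v)+\frac{\mu}{2}\|u-v\|^2$ for all $u,v\in\mathcal{X}$ and subgradients $g$ of $F$ at $v$. The candidate points are a finite set of models among which one is selected using the validation samples $f_1,\dots,f_n$. *)

theory Defs
  imports "HOL-Probability.Probability"
begin

definition is_norm :: "('a::real_vector \<Rightarrow> real) \<Rightarrow> bool" where
  "is_norm N \<longleftrightarrow> (\<forall>x. 0 \<le> N x) \<and> (\<forall>x. N x = 0 \<longleftrightarrow> x = 0)
     \<and> (\<forall>x y. N (x + y) \<le> N x + N y) \<and> (\<forall>c x. N (c *\<^sub>R x) = \<bar>c\<bar> * N x)"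

definition subgradient_on :: "('a::real_inner \<Rightarrow> real) \<Rightarrow> 'a set \<Rightarrow> 'a \<Rightarrow> 'a \<Rightarrow> bool" where
  "subgradient_on F X v g \<longleftrightarrow> (\<forall>u\<in>X. F u \<ge> F v + g \<bullet> (u - v))"

definition strongly_convex_wrt ::
  "('a::real_inner \<Rightarrow> real) \<Rightarrow> real \<Rightarrow> ('a \<Rightarrow> real) \<Rightarrow> 'a set \<Rightarrow> bool" where
  "strongly_convex_wrt N \<mu> F X \<longleftrightarrow>
     (\<forall>u\<in>X. \<forall>v\<in>X. \<forall>g. subgradient_on F X v g \<longrightarrow>
        F u \<ge> F v + g \<bullet> (u - v) + \<mu> / 2 * (N (u - v))\<^sup>2)"

end

theory Submission
  imports Defs
begin

text \<open>
  A candidate x whose excess risk exceeds the threshold can only be selected if its empirical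
  risk does not exceed that of the best candidate y. Hoeffding's inequality bounds the probability
  of this by exp (-n \<Delta>^2 / (2 L^2 \<parallel>x - y\<parallel>^2)) with \<Delta> = F x - F y. Strong convexity gives quadratic
  growth \<mu>/2 \<parallel>u - x*\<parallel>^2 \<le> F u - F* around the minimiser, so \<parallel>x - y\<parallel>^2 \<le> 6 (F x - F*) / \<mu> while
  \<Delta> \<ge> (F x - F*) / 2. Above the threshold the exponent is therefore at least ln (2K/\<delta>), and a
  union bound over the at most K bad candidates finishes the proof.

  Strong convexity is phrased through subgradients, so their existence has to be shown: a convex
  Lipschitz function has bounded subgradients by a separating hyperplane argument. This also makes
  F bounded below, without which F* = inf F would be a junk value rather than a lower bound.
\<close>

lemma is_norm_nonneg: "is_norm N \<Longrightarrow> 0 \<le> N x"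
  by (simp add: is_norm_def)

lemma is_norm_zero: "is_norm N \<Longrightarrow> N 0 = 0"
  by (simp add: is_norm_def)

lemma is_norm_triangle: "is_norm N \<Longrightarrow> N (x + y) \<le> N x + N y"
  by (simp add: is_norm_def)

lemma is_norm_scaleR: "is_norm N \<Longrightarrow> N (c *\<^sub>R x) = \<bar>c\<bar> * N x"
  by (simp add: is_norm_def)

lemma is_norm_minus_commute: "is_norm N \<Longrightarrow> N (x - y) = N (y - x)"
  by (metis is_norm_scaleR abs_minus_cancel abs_one mult_1 scaleR_minus1_left minus_diff_eq)

lemma is_norm_diff_power2_le:
  assumes N: "is_norm N"
  shows "(N (x - y))\<^sup>2 \<le> 2 * (N (x - z))\<^sup>2 + 2 * (N (y - z))\<^sup>2"
proof -
  have "N (x - y) \<le> N (x - z) + N (y - z)"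
    using is_norm_triangle[OF N, of "x - z" "z - y"] is_norm_minus_commute[OF N, of z y] by simp
  then have "(N (x - y))\<^sup>2 \<le> (N (x - z) + N (y - z))\<^sup>2"
    by (rule power_mono) (rule is_norm_nonneg[OF N])
  also have "\<dots> \<le> 2 * (N (x - z))\<^sup>2 + 2 * (N (y - z))\<^sup>2"
    using zero_le_power2[of "N (x - z) - N (y - z)"] by (simp add: power2_eq_square algebra_simps)
  finally show ?thesis .
qed

lemma convex_on_is_norm: "is_norm N \<Longrightarrow> convex_on UNIV N"
  by (rule convex_onI) (auto intro: order_trans[OF is_norm_triangle] simp: is_norm_scaleR)

lemma convex_combination_less:
  fixes a b c d t :: real
  assumes "a < c" "b < d" "0 \<le> t" "t \<le> 1"
  shows "(1 - t) * a + t * b < (1 - t) * c + t * d"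
  using assms by (smt (verit) mult_left_mono mult_strict_left_mono)

lemma convex_strict_epigraph_Lipschitz_extension:
  assumes N: "is_norm N" and F: "convex_on X F" and L: "0 \<le> L"
  shows "convex {(y, t). \<exists>x\<in>X. F x + L * N (y - x) < t}"
  unfolding convex_alt
proof (clarsimp)
  fix y1 t1 x1 y2 t2 x2 and u :: real
  assume x1: "x1 \<in> X" "F x1 + L * N (y1 - x1) < t1" and x2: "x2 \<in> X" "F x2 + L * N (y2 - x2) < t2"
    and u: "0 \<le> u" "u \<le> 1"
  define x where "x = (1 - u) *\<^sub>R x1 + u *\<^sub>R x2"
  have "x \<in> X"
    unfolding x_def by (rule convexD_alt[OF convex_on_imp_convex[OF F] x1(1) x2(1) u])
  moreover have "N ((1 - u) *\<^sub>R y1 + u *\<^sub>R y2 - x) \<le> (1 - u) * N (y1 - x1) + u * N (y2 - x2)"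
    using convex_onD[OF convex_on_is_norm[OF N], of u "y1 - x1" "y2 - x2"] u
    by (simp add: x_def algebra_simps)
  then have "F x + L * N ((1 - u) *\<^sub>R y1 + u *\<^sub>R y2 - x)
      \<le> (1 - u) * (F x1 + L * N (y1 - x1)) + u * (F x2 + L * N (y2 - x2))"
    using convex_onD[OF F u x1(1) x2(1)] mult_left_mono[OF _ L] unfolding x_def
    by (fastforce simp: algebra_simps)
  then have "F x + L * N ((1 - u) *\<^sub>R y1 + u *\<^sub>R y2 - x) < (1 - u) * t1 + u * t2"
    using convex_combination_less[OF x1(2) x2(2) u] by linarith
  ultimately show "\<exists>x\<in>X. F x + L * N ((1 - u) *\<^sub>R y1 + u *\<^sub>R y2 - x) < (1 - u) * t1 + u * t2"
    by blast
qed

lemma convex_Lipschitz_subgradient: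
  fixes F :: "'a::euclidean_space \<Rightarrow> real"
  assumes N: "is_norm N" and F: "convex_on X F" and L: "0 \<le> L"
    and Lipschitz: "\<And>x y. x \<in> X \<Longrightarrow> y \<in> X \<Longrightarrow> F x - F y \<le> L * N (x - y)"
    and v: "v \<in> X"
  obtains g where "subgradient_on F X v g" "\<And>w. g \<bullet> w \<le> L * N w"
proof -
  \<comment> \<open>The strict epigraph of the Lipschitz extension \<open>y \<mapsto> inf {F x + L N (y - x) | x \<in> X}\<close> of F;
    the separating hyperplane through (v, F v) is not vertical since A contains points
    arbitrarily far above (v, F v).\<close>
  define A where "A = {(y, t). \<exists>x\<in>X. F x + L * N (y - x) < t}"
  have "convex ((\<lambda>z. z - (v, F v)) ` A)"
    unfolding A_def by (intro convex_translation_subtract convex_strict_epigraph_Lipschitz_extension N F L)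
  moreover have "0 \<notin> (\<lambda>z. z - (v, F v)) ` A"
  proof
    assume "0 \<in> (\<lambda>z. z - (v, F v)) ` A"
    then obtain x where "x \<in> X" "F x + L * N (v - x) < F v"
      by (auto simp: A_def zero_prod_def)
    with Lipschitz[OF v this(1)] show False by linarith
  qed
  ultimately obtain a where a: "a \<noteq> 0" "\<forall>z\<in>(\<lambda>z. z - (v, F v)) ` A. 0 \<le> a \<bullet> z"
    using separating_hyperplane_set_0 by blast
  obtain h b where ab: "a = (h, b)" by fastforce
  have sep: "0 \<le> h \<bullet> (y - v) + b * (t - F v)" if "(y, t) \<in> A" for y t
    using a(2) that by (force simp: ab inner_Pair)
  have above: "(y, F v + L * N (y - v) + s) \<in> A" if "0 < s" for y s
    unfolding A_def using v that by (auto intro!: bexI[of _ v])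
  have "b \<ge> 0"
    using sep[OF above[of 1 v]] by (simp add: is_norm_zero[OF N])
  moreover have "b \<noteq> 0"
  proof
    assume "b = 0"
    then have "h \<bullet> h \<le> 0"
      using sep[OF above[of 1 "v - h"]] by (simp add: inner_minus_right)
    then have "h = 0"
      using inner_gt_zero_iff[of h] by linarith
    with \<open>b = 0\<close> a(1) show False by (simp add: ab zero_prod_def)
  qed
  ultimately have b: "b > 0" by simp
  define g where "g = - (1 / b) *\<^sub>R h"
  have g_le: "g \<bullet> (y - v) \<le> t - F v" if "(y, t) \<in> A" for y t
  proof -
    have "g \<bullet> (y - v) = - (h \<bullet> (y - v)) / b"
      by (simp add: g_def)
    also have "\<dots> \<le> t - F v"
      using sep[OF that] b by (simp add: field_simps inner_diff_right)
    finally show ?thesis .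
  qed
  show thesis
  proof
    show "subgradient_on F X v g"
      unfolding subgradient_on_def
    proof
      fix u assume u: "u \<in> X"
      show "F v + g \<bullet> (u - v) \<le> F u"
      proof (rule field_le_epsilon)
        fix s :: real assume "0 < s"
        then have "(u, F u + s) \<in> A"
          using u by (auto simp: A_def is_norm_zero[OF N] intro!: bexI[of _ u])
        from g_le[OF this] show "F v + g \<bullet> (u - v) \<le> F u + s" by simp
      qed
    qed
  next
    fix w
    show "g \<bullet> w \<le> L * N w"
    proof (rule field_le_epsilon)
      fix s :: real assume "0 < s"
      from g_le[OF above[OF this, of "v + w"]] show "g \<bullet> w \<le> L * N w + s" by simp
    qed
  qed
qed

lemma strongly_convex_Lipschitz_bdd_below:
  fixes F :: "'a::euclidean_space \<Rightarrow> real"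
  assumes N: "is_norm N" and F: "convex_on X F"
    and Lipschitz: "\<And>x y. x \<in> X \<Longrightarrow> y \<in> X \<Longrightarrow> F x - F y \<le> L * N (x - y)"
    and \<mu>: "0 < \<mu>" and strong: "strongly_convex_wrt N \<mu> F X" and v: "v \<in> X"
  shows "bdd_below (F ` X)"
proof -
  have "F x - F y \<le> \<bar>L\<bar> * N (x - y)" if "x \<in> X" "y \<in> X" for x y
    using Lipschitz[OF that] mult_right_mono[OF abs_ge_self is_norm_nonneg[OF N], of L "x - y"]
    by linarith
  then obtain g where g: "subgradient_on F X v g" "\<And>w. g \<bullet> w \<le> \<bar>L\<bar> * N w"
    using convex_Lipschitz_subgradient[OF N F abs_ge_zero _ v] by blast
  have "F v - L\<^sup>2 / (2 * \<mu>) \<le> F u" if u: "u \<in> X" for u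
  proof -
    define r where "r = N (u - v)"
    have "F v + g \<bullet> (u - v) + \<mu> / 2 * r\<^sup>2 \<le> F u"
      using strong g(1) u v by (simp add: strongly_convex_wrt_def r_def)
    moreover have "- (\<bar>L\<bar> * r) \<le> g \<bullet> (u - v)"
      using g(2)[of "v - u"] is_norm_minus_commute[OF N, of v u] by (simp add: r_def inner_diff_right)
    moreover have "0 \<le> (\<mu> * r - \<bar>L\<bar>)\<^sup>2 / (2 * \<mu>)"
      using \<mu> by simp
    then have "- (L\<^sup>2 / (2 * \<mu>)) \<le> - (\<bar>L\<bar> * r) + \<mu> / 2 * r\<^sup>2"
      using \<mu> by (simp add: field_simps power2_eq_square)
    ultimately show ?thesis by linarith
  qed
  then show ?thesis by (rule bdd_belowI2)
qed

lemma strongly_convex_quadratic_growth: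
  assumes strong: "strongly_convex_wrt N \<mu> F X" and z: "z \<in> X"
    and min: "\<And>u. u \<in> X \<Longrightarrow> F z \<le> F u" and u: "u \<in> X"
  shows "\<mu> / 2 * (N (u - z))\<^sup>2 \<le> F u - F z"
proof -
  have "subgradient_on F X z 0"
    using min by (simp add: subgradient_on_def)
  then show ?thesis
    using strong z u by (force simp: strongly_convex_wrt_def)
qed

lemma Hoeffding_exponent_bound:
  fixes \<mu> n a \<Delta> D L \<tau> :: real
  assumes \<mu>: "0 < \<mu>" and n: "0 < n" and a: "0 < a" "a \<le> 2 * \<Delta>"
    and D: "\<mu> * D\<^sup>2 \<le> 6 * a" and \<tau>: "0 \<le> \<tau>" "2 * (32 * L\<^sup>2 / (\<mu> * n) * \<tau>) < a"
  shows "\<tau> * (2 * (L * D)\<^sup>2) \<le> n * \<Delta>\<^sup>2"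
proof -
  have "64 * L\<^sup>2 * \<tau> / (\<mu> * n) < a"
    using \<tau>(2) by simp
  then have L\<tau>: "64 * L\<^sup>2 * \<tau> \<le> \<mu> * n * a"
    unfolding pos_divide_less_eq[OF mult_pos_pos[OF \<mu> n]] by (simp add: mult.commute)
  have "\<mu> * (\<tau> * (2 * (L * D)\<^sup>2)) = 2 * L\<^sup>2 * \<tau> * (\<mu> * D\<^sup>2)"
    by (simp add: power_mult_distrib algebra_simps)
  also have "\<dots> \<le> 2 * L\<^sup>2 * \<tau> * (6 * a)"
    using D \<tau> by (intro mult_left_mono) auto
  also have "\<dots> \<le> 12 * a * (\<mu> * n * a / 64)"
    using L\<tau> a by (simp add: algebra_simps)
  also have "\<dots> \<le> \<mu> * (n * (a / 2)\<^sup>2)"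
    using \<mu> n a by (simp add: power2_eq_square)
  also have "\<dots> \<le> \<mu> * (n * \<Delta>\<^sup>2)"
    using \<mu> n a by (intro mult_left_mono power_mono) auto
  finally show ?thesis
    using \<mu> by simp
qed

lemma (in prob_space) prob_ge_one_minus_union_bound:
  assumes I: "finite I" and E: "E ` I \<subseteq> events" and G: "G \<in> events"
    and good: "space M - (\<Union>i\<in>I. E i) \<subseteq> G"
  shows "1 - (\<Sum>i\<in>I. prob (E i)) \<le> prob G"
proof -
  have "1 - (\<Sum>i\<in>I. prob (E i)) \<le> 1 - prob (\<Union>i\<in>I. E i)"
    using finite_measure_subadditive_finite[OF I E] by simp
  also have "\<dots> = prob (space M - (\<Union>i\<in>I. E i))"
    using E by (intro prob_compl[symmetric] sets.finite_UN I) auto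
  also have "\<dots> \<le> prob G"
    by (rule finite_measure_mono[OF good G])
  finally show ?thesis .
qed

lemma (in prob_space) prob_argmin_within_threshold:
  fixes Z :: "'i \<Rightarrow> 'a \<Rightarrow> real" and r :: "'i \<Rightarrow> real"
  assumes I: "finite I" and Z: "\<And>k. k \<in> I \<Longrightarrow> Z k \<in> borel_measurable M" and b: "b \<in> I"
  shows "1 - (\<Sum>k\<in>{k \<in> I. T < r k}. prob {\<omega> \<in> space M. Z k \<omega> \<le> Z b \<omega>})
    \<le> prob {\<omega> \<in> space M. \<forall>k\<in>I. (\<forall>j\<in>I. Z k \<omega> \<le> Z j \<omega>) \<longrightarrow> r k \<le> T}"
proof (rule prob_ge_one_minus_union_bound)
  show "(\<lambda>k. {\<omega> \<in> space M. Z k \<omega> \<le> Z b \<omega>}) ` {k \<in> I. T < r k} \<subseteq> events"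
    using Z b by (auto intro: borel_measurable_le)
  show "{\<omega> \<in> space M. \<forall>k\<in>I. (\<forall>j\<in>I. Z k \<omega> \<le> Z j \<omega>) \<longrightarrow> r k \<le> T} \<in> events"
    using I Z b by (intro sets.sets_Collect_finite_All' sets.sets_Collect_imp sets.sets_Collect_const
        borel_measurable_le) auto
  show "space M - (\<Union>k\<in>{k \<in> I. T < r k}. {\<omega> \<in> space M. Z k \<omega> \<le> Z b \<omega>})
    \<subseteq> {\<omega> \<in> space M. \<forall>k\<in>I. (\<forall>j\<in>I. Z k \<omega> \<le> Z j \<omega>) \<longrightarrow> r k \<le> T}"
    using b by force
qed (use I in simp)

lemma convex_on_integral:
  fixes h :: "'a::real_vector \<Rightarrow> 'w \<Rightarrow> real"
  assumes X: "convex X" and convex: "\<And>\<omega>. \<omega> \<in> space M \<Longrightarrow> convex_on X (\<lambda>x. h x \<omega>)"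
    and int: "\<And>x. x \<in> X \<Longrightarrow> integrable M (h x)"
  shows "convex_on X (\<lambda>x. integral\<^sup>L M (h x))"
proof (rule convex_onI[OF _ X])
  fix t :: real and x y assume t: "0 < t" "t < 1" and x: "x \<in> X" and y: "y \<in> X"
  have "integral\<^sup>L M (h ((1 - t) *\<^sub>R x + t *\<^sub>R y)) \<le> integral\<^sup>L M (\<lambda>\<omega>. (1 - t) * h x \<omega> + t * h y \<omega>)"
    using t x y
    by (intro integral_mono int convexD_alt[OF X] convex_onD[OF convex] Bochner_Integration.integrable_add
          Bochner_Integration.integrable_mult_right) auto
  also have "\<dots> = (1 - t) * integral\<^sup>L M (h x) + t * integral\<^sup>L M (h y)"
    using int x y by simp
  finally show "integral\<^sup>L M (h ((1 - t) *\<^sub>R x + t *\<^sub>R y))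
      \<le> (1 - t) * integral\<^sup>L M (h x) + t * integral\<^sup>L M (h y)" .
qed

text \<open>The sample \<open>S 0\<close> plays the role of the fresh sample S defining the risk;
  \<open>S 1, \<dots>, S n\<close> are the validation samples.\<close>

locale iid_validation = prob_space M for M :: "'w measure" +
  fixes N :: "'s measure" and S :: "nat \<Rightarrow> 'w \<Rightarrow> 's" and n :: nat
    and f :: "'a::real_vector \<Rightarrow> 's \<Rightarrow> real" and X :: "'a set"
    and nrm :: "'a \<Rightarrow> real" and L :: real
  assumes norm: "is_norm nrm"
    and S_rv: "\<And>i. i \<in> {0..n} \<Longrightarrow> S i \<in> measurable M N"
    and S_indep: "indep_vars (\<lambda>_. N) S {0..n}"
    and S_ident: "\<And>i. i \<in> {0..n} \<Longrightarrow> distr M N (S i) = distr M N (S 0)"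
    and n_pos: "n \<ge> 1"
    and f_meas: "\<And>x. x \<in> X \<Longrightarrow> f x \<in> borel_measurable N"
    and f_integrable: "\<And>x. x \<in> X \<Longrightarrow> integrable M (\<lambda>\<omega>. f x (S 0 \<omega>))"
    and f_Lipschitz: "AE s in distr M N (S 0). \<forall>x\<in>X. \<forall>x'\<in>X. \<bar>f x s - f x' s\<bar> \<le> L * nrm (x - x')"
begin

definition risk :: "'a \<Rightarrow> real" where
  "risk x = expectation (\<lambda>\<omega>. f x (S 0 \<omega>))"

definition empirical_risk :: "'w \<Rightarrow> 'a \<Rightarrow> real" where
  "empirical_risk \<omega> x = (\<Sum>i=1..n. f x (S i \<omega>)) / real n"

lemma borel_measurable_sample_loss [measurable]:
  "i \<in> {0..n} \<Longrightarrow> x \<in> X \<Longrightarrow> (\<lambda>\<omega>. f x (S i \<omega>)) \<in> borel_measurable M"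
  using measurable_compose[OF S_rv f_meas] .

lemma borel_measurable_empirical_risk [measurable]:
  "x \<in> X \<Longrightarrow> (\<lambda>\<omega>. empirical_risk \<omega> x) \<in> borel_measurable M"
  unfolding empirical_risk_def by measurable

lemma AE_sample_Lipschitz:
  assumes x: "x \<in> X" and x': "x' \<in> X"
  shows "AE \<omega> in M. \<bar>f x (S 0 \<omega>) - f x' (S 0 \<omega>)\<bar> \<le> L * nrm (x - x')"
proof -
  have [measurable]: "f x \<in> borel_measurable N" "f x' \<in> borel_measurable N" "S 0 \<in> measurable M N"
    using f_meas[OF x] f_meas[OF x'] S_rv by auto
  have "AE s in distr M N (S 0). \<bar>f x s - f x' s\<bar> \<le> L * nrm (x - x')"
    using f_Lipschitz x x' by (auto elim!: eventually_mono)
  then show ?thesis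
    by (subst (asm) AE_distr_iff) auto
qed

lemma risk_Lipschitz:
  assumes x: "x \<in> X" and x': "x' \<in> X"
  shows "risk x - risk x' \<le> L * nrm (x - x')"
proof -
  have "risk x - risk x' = expectation (\<lambda>\<omega>. f x (S 0 \<omega>) - f x' (S 0 \<omega>))"
    using f_integrable[OF x] f_integrable[OF x'] by (simp add: risk_def)
  also have "\<dots> \<le> expectation (\<lambda>\<omega>. L * nrm (x - x'))"
    using AE_sample_Lipschitz[OF x x'] f_integrable[OF x] f_integrable[OF x']
    by (intro integral_mono_AE) (auto elim!: eventually_mono)
  also have "\<dots> = L * nrm (x - x')"
    by (simp add: prob_space)
  finally show ?thesis .
qed

lemma convex_on_risk:
  assumes "convex X" and "\<And>s. s \<in> space N \<Longrightarrow> convex_on X (\<lambda>x. f x s)"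
  shows "convex_on X risk"
  unfolding risk_def[abs_def]
  using assms f_integrable measurable_space[OF S_rv[of 0]] by (intro convex_on_integral) auto

lemma Hoeffding_ineq_iid_loss_difference:
  assumes x: "x \<in> X" and y: "y \<in> X" and B: "L * nrm (x - y) \<le> B"
  defines "Y \<equiv> \<lambda>i \<omega>. f x (S i \<omega>) - f y (S i \<omega>)"
  shows "Hoeffding_ineq_iid M {1..n} Y (Y 0) (-B) B"
proof unfold_locales
  have "indep_vars (\<lambda>_. N) S {1..n}"
    by (rule indep_vars_subset[OF S_indep]) auto
  then show "indep_vars (\<lambda>_. borel) Y {1..n}"
    unfolding Y_def
    by (rule indep_vars_compose2[where Y="\<lambda>_ s. f x s - f y s"]) (use x y f_meas in auto)
next
  fix i assume i: "i \<in> {1..n}"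
  have "distr M borel (Y i) = distr (distr M N (S i)) borel (\<lambda>s. f x s - f y s)"
    using i x y S_rv f_meas by (subst distr_distr) (auto simp: Y_def comp_def)
  also have "\<dots> = distr M borel (Y 0)"
    using i x y S_rv f_meas by (subst S_ident, simp, subst distr_distr) (auto simp: Y_def comp_def)
  finally show "distr M borel (Y i) = distr M borel (Y 0)" .
next
  show "AE \<omega> in M. Y 0 \<omega> \<in> {- B..B}"
    using AE_sample_Lipschitz[OF x y] by (rule eventually_mono) (use B in \<open>auto simp: Y_def\<close>)
qed (use x y in \<open>auto simp: Y_def\<close>)

lemma prob_empirical_risk_le:
  assumes x: "x \<in> X" and y: "y \<in> X" and less: "risk y < risk x"
  shows "prob {\<omega> \<in> space M. empirical_risk \<omega> x \<le> empirical_risk \<omega> y}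
    \<le> exp (- real n * (risk x - risk y)\<^sup>2 / (2 * (L * nrm (x - y))\<^sup>2))"
proof -
  define \<Delta> where "\<Delta> = risk x - risk y"
  define B where "B = \<bar>L\<bar> * nrm (x - y)"
  define Y where "Y = (\<lambda>i \<omega>. f x (S i \<omega>) - f y (S i \<omega>))"
  have L_le_B: "L * nrm (x - y) \<le> B"
    unfolding B_def by (rule mult_right_mono[OF abs_ge_self is_norm_nonneg[OF norm]])
  then have "\<Delta> \<le> B"
    using risk_Lipschitz[OF x y] by (simp add: \<Delta>_def)
  moreover have \<Delta>: "0 < \<Delta>"
    using less by (simp add: \<Delta>_def)
  ultimately have "0 < B" by simp
  interpret Hoeffding_ineq_iid M "{1..n}" Y "Y 0" "-B" B "expectation (Y 0)"
    unfolding Y_def by (rule Hoeffding_ineq_iid_loss_difference[OF x y L_le_B])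
  have "expectation (Y 0) = \<Delta>"
    using f_integrable[OF x] f_integrable[OF y] by (simp add: Y_def \<Delta>_def risk_def)
  then have "{\<omega> \<in> space M. empirical_risk \<omega> x \<le> empirical_risk \<omega> y}
      = {\<omega> \<in> space M. (\<Sum>i\<in>{1..n}. Y i \<omega>) / real (card {1..n}) \<le> expectation (Y 0) - \<Delta>}"
    using n_pos by (auto simp: empirical_risk_def Y_def sum_subtractf divide_le_cancel divide_le_0_iff)
  also have "prob \<dots> \<le> exp (- 2 * real (card {1..n}) * \<Delta>\<^sup>2 / (B - - B)\<^sup>2)"
    using \<Delta> \<open>0 < B\<close> n_pos by (intro Hoeffding_ineq_le') auto
  also have "- 2 * real (card {1..n}) * \<Delta>\<^sup>2 / (B - - B)\<^sup>2
      = - real n * (risk x - risk y)\<^sup>2 / (2 * (L * nrm (x - y))\<^sup>2)"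
    by (simp add: \<Delta>_def B_def power_mult_distrib field_simps)
  finally show ?thesis .
qed

lemma prob_empirical_risk_le_quadratic_growth:
  assumes \<mu>: "0 < \<mu>" and z: "z \<in> X"
    and growth: "\<And>u. u \<in> X \<Longrightarrow> \<mu> / 2 * (nrm (u - z))\<^sup>2 \<le> risk u - risk z"
    and x: "x \<in> X" and y: "y \<in> X" and \<tau>: "0 \<le> \<tau>"
    and gap: "2 * max (risk y - risk z) (32 * L\<^sup>2 / (\<mu> * real n) * \<tau>) < risk x - risk z"
  shows "prob {\<omega> \<in> space M. empirical_risk \<omega> x \<le> empirical_risk \<omega> y} \<le> exp (- \<tau>)"
proof -
  have gap_y: "2 * (risk y - risk z) < risk x - risk z"
    and gap_\<tau>: "2 * (32 * L\<^sup>2 / (\<mu> * real n) * \<tau>) < risk x - risk z"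
    using gap by (smt (verit) max.cobounded1 max.cobounded2)+
  have "0 \<le> risk y - risk z"
    using growth[OF y] \<mu> by (smt (verit) divide_nonneg_pos mult_nonneg_nonneg zero_le_power2)
  then have a: "0 < risk x - risk z" "risk x - risk z \<le> 2 * (risk x - risk y)"
    using gap_y by auto
  have "\<mu> * (nrm (x - y))\<^sup>2 \<le> \<mu> * (2 * (nrm (x - z))\<^sup>2 + 2 * (nrm (y - z))\<^sup>2)"
    using \<mu> is_norm_diff_power2_le[OF norm] by simp
  also have "\<dots> \<le> 6 * (risk x - risk z)"
    using growth[OF x] growth[OF y] gap_y by (simp add: algebra_simps)
  finally have exponent: "\<tau> * (2 * (L * nrm (x - y))\<^sup>2) \<le> n * (risk x - risk y)\<^sup>2"
    using Hoeffding_exponent_bound[OF \<mu> _ a _ \<tau> gap_\<tau>] n_pos by simp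
  have less: "risk y < risk x"
    using a by simp
  then have "0 < L * nrm (x - y)"
    using risk_Lipschitz[OF x y] by simp
  then have "0 < 2 * (L * nrm (x - y))\<^sup>2"
    by (smt (verit) zero_less_power2)
  with exponent have "exp (- real n * (risk x - risk y)\<^sup>2 / (2 * (L * nrm (x - y))\<^sup>2)) \<le> exp (- \<tau>)"
    by (simp add: pos_le_divide_eq)
  with prob_empirical_risk_le[OF x y less] show ?thesis
    by (rule order_trans)
qed

lemma greedy_selection_excess_risk:
  assumes \<mu>: "0 < \<mu>" and z: "z \<in> X"
    and growth: "\<And>u. u \<in> X \<Longrightarrow> \<mu> / 2 * (nrm (u - z))\<^sup>2 \<le> risk u - risk z"
    and xs: "\<And>k. k \<in> {0..K} \<Longrightarrow> xs k \<in> X" and \<delta>: "0 < \<delta>" "\<delta> < 1"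
  shows "prob {\<omega> \<in> space M. \<forall>k\<in>{0..K}.
            (\<forall>j\<in>{0..K}. empirical_risk \<omega> (xs k) \<le> empirical_risk \<omega> (xs j)) \<longrightarrow>
            risk (xs k) - risk z \<le> 2 * max ((MIN j\<in>{0..K}. risk (xs j)) - risk z)
                                      (32 * L\<^sup>2 / (\<mu> * real n) * ln (2 * real K / \<delta>))}
         \<ge> 1 - \<delta>"
proof -
  obtain b where b: "b \<in> {0..K}" "risk (xs b) = (MIN j\<in>{0..K}. risk (xs j))"
    using Min_in[of "(\<lambda>j. risk (xs j)) ` {0..K}"] by fastforce
  define \<tau> where "\<tau> = ln (2 * real K / \<delta>)"
  define T where "T = 2 * max (risk (xs b) - risk z) (32 * L\<^sup>2 / (\<mu> * real n) * \<tau>)"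
  define Bad where "Bad = {k \<in> {0..K}. T < risk (xs k) - risk z}"
  have "0 \<le> risk (xs b) - risk z"
    using growth[OF xs[OF b(1)]] \<mu> by (smt (verit) divide_nonneg_pos mult_nonneg_nonneg zero_le_power2)
  then have "risk (xs b) - risk z \<le> T"
    unfolding T_def by (smt (verit) max.cobounded1)
  then have "b \<notin> Bad"
    by (simp add: Bad_def)
  have prob_bad: "prob {\<omega> \<in> space M. empirical_risk \<omega> (xs k) \<le> empirical_risk \<omega> (xs b)}
      \<le> \<delta> / (2 * real K)" if k: "k \<in> Bad" for k
  proof -
    have "k \<noteq> b"
      using k \<open>b \<notin> Bad\<close> by auto
    then have "1 \<le> 2 * real K / \<delta>"
      using k b(1) \<delta> by (auto simp: Bad_def field_simps)
    then have \<tau>: "0 \<le> \<tau>" "exp (- \<tau>) = \<delta> / (2 * real K)"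
      by (simp_all add: \<tau>_def exp_minus)
    with prob_empirical_risk_le_quadratic_growth[OF \<mu> z growth xs[of k] xs[OF b(1)] \<tau>(1)] k
    show ?thesis
      by (simp add: Bad_def T_def)
  qed
  have "Bad \<subseteq> {0..K} - {b}"
    using \<open>b \<notin> Bad\<close> by (auto simp: Bad_def)
  then have "card Bad \<le> K"
    using card_mono[of "{0..K} - {b}" Bad] b(1) by simp
  have "(\<Sum>k\<in>Bad. prob {\<omega> \<in> space M. empirical_risk \<omega> (xs k) \<le> empirical_risk \<omega> (xs b)})
      \<le> real (card Bad) * (\<delta> / (2 * real K))"
    using prob_bad by (rule sum_bounded_above)
  also have "\<dots> \<le> real K * (\<delta> / (2 * real K))"
    using \<open>card Bad \<le> K\<close> \<delta> by (intro mult_right_mono) auto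
  also have "\<dots> \<le> \<delta>"
    using \<delta> by (cases "K = 0") auto
  finally show ?thesis
    using prob_argmin_within_threshold[of "{0..K}" "\<lambda>k \<omega>. empirical_risk \<omega> (xs k)" b T
        "\<lambda>k. risk (xs k) - risk z"] xs b
    by (simp add: Bad_def T_def \<tau>_def)
qed

end

theorem proposition1:
  fixes nrm :: "real^'d \<Rightarrow> real"
    and X :: "(real^'d) set"
    and M :: "'w measure" and N :: "'s measure"
    and S :: "nat \<Rightarrow> 'w \<Rightarrow> 's"
    and f :: "real^'d \<Rightarrow> 's \<Rightarrow> real"
    and n K :: nat and L \<mu> \<delta> :: real
    and xs :: "nat \<Rightarrow> real^'d"
    and F :: "real^'d \<Rightarrow> real" and Fbar :: "'w \<Rightarrow> real^'d \<Rightarrow> real" and Fstar :: real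
  assumes norm: "is_norm nrm"
    and X_closed: "closed X" and X_convex: "convex X"
    and M_prob: "prob_space M"
    and S_rv: "\<And>i. i \<in> {0..n} \<Longrightarrow> S i \<in> measurable M N"
    and S_indep: "prob_space.indep_vars M (\<lambda>_. N) S {0..n}"
    and S_ident: "\<And>i. i \<in> {0..n} \<Longrightarrow> distr M N (S i) = distr M N (S 0)"
    and n_pos: "n \<ge> 1"
    and f_meas: "\<And>x. x \<in> X \<Longrightarrow> (\<lambda>s. f x s) \<in> borel_measurable N"
    and f_integrable: "\<And>x. x \<in> X \<Longrightarrow> integrable M (\<lambda>\<omega>. f x (S 0 \<omega>))"
    and f_convex: "\<And>s. s \<in> space N \<Longrightarrow> convex_on X (\<lambda>x. f x s)"
    and F_def: "F \<equiv> (\<lambda>x. integral\<^sup>L M (\<lambda>\<omega>. f x (S 0 \<omega>)))"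
    and Fbar_def: "Fbar \<equiv> (\<lambda>\<omega> x. (\<Sum>i=1..n. f x (S i \<omega>)) / real n)"
    and f_Lipschitz: "AE s in distr M N (S 0). \<forall>x\<in>X. \<forall>x'\<in>X. \<bar>f x s - f x' s\<bar> \<le> L * nrm (x - x')"
    and mu_pos: "\<mu> > 0"
    and F_strongly_convex: "strongly_convex_wrt nrm \<mu> F X"
    and Fstar_def: "Fstar \<equiv> (INF x\<in>X. F x)"
    and Fstar_min: "\<exists>x\<in>X. F x = Fstar"
    and xs_in: "\<And>k. k \<in> {0..K} \<Longrightarrow> xs k \<in> X"
    and delta: "0 < \<delta>" "\<delta> < 1"
  shows "measure M {\<omega> \<in> space M. \<forall>k\<in>{0..K}.
            (\<forall>j\<in>{0..K}. Fbar \<omega> (xs k) \<le> Fbar \<omega> (xs j)) \<longrightarrow>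
            F (xs k) - Fstar \<le> 2 * max ((MIN j\<in>{0..K}. F (xs j)) - Fstar)
                                      (32 * L\<^sup>2 / (\<mu> * real n) * ln (2 * real K / \<delta>))}
         \<ge> 1 - \<delta>"
proof -
  interpret iid_validation M N S n f X nrm L
    by (rule iid_validation.intro[OF M_prob iid_validation_axioms.intro])
      (fact norm S_rv S_indep S_ident n_pos f_meas f_integrable f_Lipschitz)+
  have F_risk: "F = risk" and Fbar_empirical: "Fbar = empirical_risk"
    by (simp_all add: F_def Fbar_def risk_def empirical_risk_def fun_eq_iff)
  have convex: "convex_on X F"
    unfolding F_risk using X_convex f_convex by (rule convex_on_risk)
  have Lipschitz: "\<And>x y. x \<in> X \<Longrightarrow> y \<in> X \<Longrightarrow> F x - F y \<le> L * nrm (x - y)"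
    unfolding F_risk by (rule risk_Lipschitz)
  obtain z where z: "z \<in> X" "F z = Fstar"
    using Fstar_min by blast
  have "bdd_below (F ` X)"
    by (rule strongly_convex_Lipschitz_bdd_below[OF norm convex Lipschitz mu_pos F_strongly_convex z(1)])
  then have "\<And>u. u \<in> X \<Longrightarrow> F z \<le> F u"
    unfolding z(2) Fstar_def by (rule cINF_lower)
  then have "\<And>u. u \<in> X \<Longrightarrow> \<mu> / 2 * (nrm (u - z))\<^sup>2 \<le> risk u - risk z"
    using strongly_convex_quadratic_growth[OF F_strongly_convex z(1)] by (simp add: F_risk)
  from greedy_selection_excess_risk[OF mu_pos z(1) this xs_in delta]
  show ?thesis
    using z(2) by (simp add: F_risk Fbar_empirical)
qed

end
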